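(* There exist a function $\gamma:[0,\infty)\to\mathbb{R}$ and $t_0>0$ such that (i) $\gamma(t)>0$ for $t\in[0,t_0)$ and $\gamma(t)=0$ for $t\in[t_0,\infty)$; (ii) $e^{-t}-w_-(e^{-t})-\int_0^tw_-(e^{-t+s})\gamma(s)\,ds=0$ for all $t\in[0,t_0]$; (iii) $e^{-t}-w_-(e^{-t})-\int_0^tw_-(e^{-t+s})\gamma(s)\,ds<0$ for all $t\in(t_0,\infty)$.
   Context: $w_-:[0,1]\to[0,1]$ is strictly increasing, thrice differentiable, with $w_-(0)=0$, $w_-(1)=1$, $w_-'(0)>1$, $w_-'(1)>1$ and $w_-'''(p)>0$ for all $p$. *)

theory Defs
  imports "HOL-Analysis.Analysis"
begin

end

theory Submission
  imports Defs
begin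

(* Put K(r) = w(exp(-r)) and g(t) = exp(-t) - w(exp(-t)); the expression in the theorem is
   g(t) - (K * gamma)(t), a convolution over [0,t].  Since K(0) = w(1) = 1, differentiating the
   first-kind Volterra equation g = K * gamma gives the second-kind equation
   gamma = g' - K' * gamma, which has a continuous solution on every [0,T] by Banach's fixed point
   theorem in an exponentially weighted sup norm; that solution also solves g = K * gamma.
   We have gamma(0) = w'(1) - 1 > 0, and g(T) < 0 for some T because w'(0) > 1, so K >= 0 forces
   gamma to vanish in (0,T].  Cut gamma off at its first zero t0.  For t > t0 the expression is
   Phi(exp(-t)) with Phi(x) = x - w(x) - integral over [0,t0] of w(x e^s) gamma(s); Phi vanishes
   at 0 and doubly at exp(-t0) (using gamma(t0) = 0), and Phi'' is strictly decreasing because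
   w''' > 0, so Phi < 0 in between. *)

lemma has_real_derivative_affine_extension:
  fixes k k' :: "real \<Rightarrow> real"
  assumes d: "\<And>r. r \<ge> 0 \<Longrightarrow> (k has_real_derivative k' r) (at r within {0..})"
  shows "((\<lambda>r. if r \<ge> 0 then k r else k 0 + k' 0 * r) has_real_derivative k' (max 0 r)) (at r)"
proof -
  define kk where "kk = (\<lambda>r. if r \<ge> 0 then k r else k 0 + k' 0 * r)"
  have right: "(kk has_real_derivative k' r) (at r within {0..})" if "r \<ge> 0" for r
    using has_field_derivative_transform_within[OF d[OF that] zero_less_one, of kk] that
    by (auto simp: kk_def)
  have left: "(kk has_real_derivative k' 0) (at r within {..0})" if "r \<le> 0" for r
  proof -
    have "((\<lambda>r. k 0 + k' 0 * r) has_real_derivative k' 0) (at r within {..0})"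
      by (auto intro!: derivative_eq_intros)
    then show ?thesis
      using has_field_derivative_transform_within[OF _ zero_less_one, of _ "k' 0" r "{..0}" kk] that
      by (auto simp: kk_def)
  qed
  consider "r > 0" | "r < 0" | "r = 0" by linarith
  then have "(kk has_real_derivative k' (max 0 r)) (at r)"
  proof cases
    case 1
    then show ?thesis
      using right[of r] at_within_interior[of r "{0..}"] by (simp add: max_def)
  next
    case 2
    then show ?thesis
      using left[of r] at_within_interior[of r "{..0}"] by (simp add: max_def)
  next
    case 3
    have "{0..} \<union> {..0} = (UNIV :: real set)"
      by auto
    then have "at (0::real) = at 0 within ({0..} \<union> {..0})"
      by simp
    moreover have "((\<lambda>y. (kk y - kk 0) / (y - 0)) \<longlongrightarrow> k' 0) (at 0 within ({0..} \<union> {..0}))"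
      unfolding Lim_within_Un
      using right[of 0] left[of 0] by (auto simp: has_field_derivative_iff)
    ultimately show ?thesis
      using 3 by (simp add: has_field_derivative_iff)
  qed
  then show ?thesis
    by (simp add: kk_def)
qed

lemma has_real_derivative_integral_translate:
  fixes k k' f :: "real \<Rightarrow> real"
  assumes dk: "\<And>r. (k has_real_derivative k' r) (at r)"
    and ck': "continuous_on UNIV k'" and cf: "continuous_on {a..b} f"
    and S: "x \<in> S" "convex S"
  shows "((\<lambda>x. integral {a..b} (\<lambda>s. k (x - s) * f s)) has_real_derivative
      integral {a..b} (\<lambda>s. k' (x - s) * f s)) (at x within S)"
proof -
  have ck: "continuous_on UNIV k"
    using dk by (meson DERIV_continuous continuous_at_imp_continuous_on)
  have "((\<lambda>x. integral (cbox a b) (\<lambda>s. k (x - s) * f s)) has_real_derivative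
      integral (cbox a b) (\<lambda>s. k' (x - s) * f s)) (at x within S)"
  proof (rule leibniz_rule_field_derivative[where fx="\<lambda>x s. k' (x - s) * f s"])
    fix x s :: real
    have "((\<lambda>x. x - s) has_real_derivative 1) (at x within S)"
      by (auto intro!: derivative_eq_intros)
    from DERIV_chain2[OF dk this]
    show "((\<lambda>x. k (x - s) * f s) has_real_derivative k' (x - s) * f s) (at x within S)"
      by (auto intro!: DERIV_cmult_right)
  next
    show "continuous_on (S \<times> cbox a b) (\<lambda>(x, s). k' (x - s) * f s)"
      unfolding cbox_interval case_prod_unfold
      by (intro continuous_intros continuous_on_compose2[OF ck'] continuous_on_compose2[OF cf]) auto
  next
    show "(\<lambda>s. k (x - s) * f s) integrable_on cbox a b" for x
      unfolding cbox_interval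
      by (intro integrable_continuous_interval continuous_intros cf continuous_on_compose2[OF ck])
        auto
  qed (use S in auto)
  then show ?thesis
    by (simp add: cbox_interval)
qed

lemma integral_convolution_affine_tail:
  fixes k f :: "real \<Rightarrow> real"
  assumes affine: "\<And>r. r \<le> 0 \<Longrightarrow> k r = k 0 + c * r"
    and ck: "continuous_on UNIV k" and cf: "continuous_on {0..T} f" and x: "x \<in> {0..T}"
  shows "integral {0..x} (\<lambda>s. k (x - s) * f s) = integral {0..T} (\<lambda>s. k (x - s) * f s)
    - (k 0 + c * x) * integral {x..T} f + c * integral {x..T} (\<lambda>s. s * f s)"
proof -
  have cf': "continuous_on {x..T} f"
    using x by (intro continuous_on_subset[OF cf]) auto
  have "integral {x..T} (\<lambda>s. k (x - s) * f s)
      = integral {x..T} (\<lambda>s. (k 0 + c * x) * f s - c * (s * f s))"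
  proof (rule integral_cong)
    fix s assume "s \<in> {x..T}"
    then have affine_at: "k (x - s) = k 0 + c * (x - s)"
      by (intro affine) simp
    show "k (x - s) * f s = (k 0 + c * x) * f s - c * (s * f s)"
      unfolding affine_at by (simp add: algebra_simps)
  qed
  also have "\<dots> = (k 0 + c * x) * integral {x..T} f - c * integral {x..T} (\<lambda>s. s * f s)"
    by (subst integral_diff) (auto intro!: integrable_continuous_interval continuous_intros cf')
  moreover have "integral {0..T} (\<lambda>s. k (x - s) * f s)
      = integral {0..x} (\<lambda>s. k (x - s) * f s) + integral {x..T} (\<lambda>s. k (x - s) * f s)"
    using x by (intro Henstock_Kurzweil_Integration.integral_combine[symmetric]
        integrable_continuous_interval continuous_intros cf continuous_on_compose2[OF ck]) auto
  ultimately show ?thesis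
    by simp
qed

lemma convolution_has_real_derivative_affine_tail:
  fixes k k' f :: "real \<Rightarrow> real"
  assumes dk: "\<And>r. (k has_real_derivative k' r) (at r)"
    and ck': "continuous_on UNIV k'"
    and affine: "\<And>r. r \<le> 0 \<Longrightarrow> k r = k 0 + k' 0 * r" "\<And>r. r \<le> 0 \<Longrightarrow> k' r = k' 0"
    and cf: "continuous_on {0..T} f" and t: "t \<in> {0..T}"
  shows "((\<lambda>x. integral {0..x} (\<lambda>s. k (x - s) * f s)) has_real_derivative
            k 0 * f t + integral {0..t} (\<lambda>s. k' (t - s) * f s)) (at t within {0..T})"
proof -
  have ck: "continuous_on UNIV k"
    using dk by (meson DERIV_continuous continuous_at_imp_continuous_on)
  \<comment> \<open>Beyond the diagonal the kernel is affine, so the convolution is a fixed integral over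
    \<open>{0..T}\<close> plus terms that are differentiable by the fundamental theorem of calculus.\<close>
  define P where "P x = integral {0..T} (\<lambda>s. k (x - s) * f s)
      - (k 0 + k' 0 * x) * integral {x..T} f + k' 0 * integral {x..T} (\<lambda>s. s * f s)" for x
  have conv_eq: "integral {0..x} (\<lambda>s. k (x - s) * f s) = P x" if "x \<in> {0..T}" for x
    unfolding P_def by (rule integral_convolution_affine_tail[OF affine(1) ck cf that])
  have "((\<lambda>x. k 0 + k' 0 * x) has_real_derivative k' 0) (at t within {0..T})"
    by (auto intro!: derivative_eq_intros)
  moreover have "((\<lambda>x. integral {x..T} f) has_real_derivative - f t) (at t within {0..T})"
    by (rule integral_has_real_derivative'[OF cf t])
  moreover have "((\<lambda>x. integral {x..T} (\<lambda>s. s * f s)) has_real_derivative - (t * f t))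
      (at t within {0..T})"
    by (rule integral_has_real_derivative'[OF _ t]) (intro continuous_intros cf)
  ultimately have "(P has_real_derivative k 0 * f t + (integral {0..T} (\<lambda>s. k' (t - s) * f s)
      - k' 0 * integral {t..T} f)) (at t within {0..T})"
    unfolding P_def
    by (rule DERIV_cong[OF DERIV_add[OF DERIV_diff[OF has_real_derivative_integral_translate[OF dk ck'
            cf t convex_real_interval(5)] DERIV_mult] DERIV_cmult]]) (simp add: algebra_simps)
  moreover have "integral {0..t} (\<lambda>s. k' (t - s) * f s)
      = integral {0..T} (\<lambda>s. k' (t - s) * f s) - k' 0 * integral {t..T} f"
  proof -
    have "k' r = k' 0 + 0 * r" if "r \<le> 0" for r
      unfolding mult_zero_left add_0_right using that by (rule affine(2))
    from integral_convolution_affine_tail[OF this ck' cf t] show ?thesis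
      by simp
  qed
  ultimately have "(P has_real_derivative k 0 * f t + integral {0..t} (\<lambda>s. k' (t - s) * f s))
      (at t within {0..T})"
    by simp
  then show ?thesis
    by (rule has_field_derivative_transform_within[OF _ zero_less_one t]) (use conv_eq in auto)
qed

lemma convolution_has_real_derivative:
  fixes k k' f :: "real \<Rightarrow> real"
  assumes dk: "\<And>r. r \<ge> 0 \<Longrightarrow> (k has_real_derivative k' r) (at r within {0..})"
    and ck': "continuous_on {0..} k'"
    and cf: "continuous_on {0..T} f" and t: "t \<in> {0..T}"
  shows "((\<lambda>x. integral {0..x} (\<lambda>s. k (x - s) * f s)) has_real_derivative
            k 0 * f t + integral {0..t} (\<lambda>s. k' (t - s) * f s)) (at t within {0..T})"
proof -
  define kk where "kk r = (if r \<ge> 0 then k r else k 0 + k' 0 * r)" for r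
  define kk' where "kk' r = k' (max 0 r)" for r
  have "((\<lambda>x. integral {0..x} (\<lambda>s. kk (x - s) * f s)) has_real_derivative
      kk 0 * f t + integral {0..t} (\<lambda>s. kk' (t - s) * f s)) (at t within {0..T})"
  proof (rule convolution_has_real_derivative_affine_tail[OF _ _ _ _ cf t])
    show "(kk has_real_derivative kk' r) (at r)" for r
      unfolding kk_def kk'_def by (rule has_real_derivative_affine_extension[OF dk])
    show "continuous_on UNIV kk'"
      unfolding kk'_def by (rule continuous_on_compose2[OF ck']) (auto intro!: continuous_intros)
  qed (auto simp: kk_def kk'_def)
  moreover have "integral {0..t} (\<lambda>s. kk' (t - s) * f s) = integral {0..t} (\<lambda>s. k' (t - s) * f s)"
    by (rule integral_cong) (auto simp: kk'_def)
  moreover have "integral {0..x} (\<lambda>s. kk (x - s) * f s) = integral {0..x} (\<lambda>s. k (x - s) * f s)"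
    for x
    by (rule integral_cong) (auto simp: kk_def)
  ultimately show ?thesis
    by (simp add: kk_def)
qed

lemma eq_convolution_if_derivatives_eq:
  fixes k k' g g' \<gamma> :: "real \<Rightarrow> real"
  assumes dk: "\<And>r. r \<ge> 0 \<Longrightarrow> (k has_real_derivative k' r) (at r within {0..})"
    and ck': "continuous_on {0..} k'"
    and dg: "\<And>t. t \<in> {0..T} \<Longrightarrow> (g has_real_derivative g' t) (at t within {0..T})"
    and c\<gamma>: "continuous_on {0..T} \<gamma>"
    and eq: "\<And>t. t \<in> {0..T} \<Longrightarrow> g' t = k 0 * \<gamma> t + integral {0..t} (\<lambda>s. k' (t - s) * \<gamma> s)"
    and g0: "g 0 = 0" and t: "t \<in> {0..T}"
  shows "g t = integral {0..t} (\<lambda>s. k (t - s) * \<gamma> s)"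
proof -
  define F where "F x = g x - integral {0..x} (\<lambda>s. k (x - s) * \<gamma> s)" for x
  have "(F has_real_derivative 0) (at x within {0..T})" if "x \<in> {0..T}" for x
    using DERIV_diff[OF dg[OF that] convolution_has_real_derivative[OF dk ck' c\<gamma> that]] eq[OF that]
    unfolding F_def by simp
  then obtain C where "\<forall>x\<in>{0..T}. F x = C"
    using has_field_derivative_zero_constant[of "{0..T}" F] by auto
  moreover have "F 0 = 0"
    using g0 by (simp add: F_def)
  ultimately have "F t = 0"
    using t by force
  then show ?thesis
    by (simp add: F_def)
qed

lemma integral_exp_decay_le:
  fixes l c :: real
  assumes l: "l > 0" and c: "0 \<le> c"
  shows "integral {0..c} (\<lambda>s. exp (- (l * (c - s)))) \<le> 1 / l"
proof -
  have "((\<lambda>s. exp (- (l * (c - s)))) has_integral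
      exp (- (l * (c - c))) / l - exp (- (l * (c - 0))) / l) {0..c}"
  proof (rule fundamental_theorem_of_calculus[OF c])
    fix x
    have "((\<lambda>s. exp (- (l * (c - s))) / l) has_real_derivative exp (- (l * (c - x))) * l / l)
        (at x within {0..c})"
      by (auto intro!: derivative_eq_intros)
    then show "((\<lambda>s. exp (- (l * (c - s))) / l) has_vector_derivative exp (- (l * (c - x))))
        (at x within {0..c})"
      using l by (simp add: has_real_derivative_iff_has_vector_derivative)
  qed
  then show ?thesis
    using l by (simp add: integral_unique)
qed

lemma bcontfun_fixpoint_on_cbox:
  fixes G :: "('a::euclidean_space \<Rightarrow>\<^sub>C 'b::complete_space) \<Rightarrow> 'a \<Rightarrow> 'b"
  assumes cont: "\<And>\<Psi>. continuous_on (cbox a b) (G \<Psi>)"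
    and contraction: "\<And>\<Psi> \<Phi> x. x \<in> cbox a b \<Longrightarrow> dist (G \<Psi> x) (G \<Phi> x) \<le> q * dist \<Psi> \<Phi>"
    and q: "0 \<le> q" "q < 1" and ne: "cbox a b \<noteq> {}"
  obtains \<Psi> where "\<And>x. x \<in> cbox a b \<Longrightarrow> apply_bcontfun \<Psi> x = G \<Psi> x"
proof -
  define Op where "Op \<Psi> = (SOME \<Phi>. \<forall>x. apply_bcontfun \<Phi> x = G \<Psi> (clamp a b x))" for \<Psi>
  have Op: "apply_bcontfun (Op \<Psi>) x = G \<Psi> (clamp a b x)" for \<Psi> x
  proof -
    obtain \<Phi> where "\<And>x. x \<in> cbox a b \<Longrightarrow> apply_bcontfun \<Phi> x = G \<Psi> x"
      and \<Phi>: "\<And>x. apply_bcontfun \<Phi> x = G \<Psi> (clamp a b x)"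
      by (rule continuous_on_cbox_bcontfunE[OF cont[of \<Psi>]]) blast
    have "\<forall>x. apply_bcontfun (Op \<Psi>) x = G \<Psi> (clamp a b x)"
      unfolding Op_def by (rule someI[where x=\<Phi>]) (simp add: \<Phi>)
    then show ?thesis ..
  qed
  have clamp: "clamp a b x \<in> cbox a b" for x
    using ne by (intro clamp_in_interval) (simp add: box_ne_empty)
  have "dist (Op \<Psi>) (Op \<Phi>) \<le> q * dist \<Psi> \<Phi>" for \<Psi> \<Phi>
    by (rule dist_bound) (unfold Op, rule contraction[OF clamp])
  then obtain \<Psi> where "Op \<Psi> = \<Psi>"
    using banach_fix_type[OF q] by blast
  then show ?thesis
    by (intro that[of \<Psi>]) (metis Op clamp_cancel_cbox)
qed

lemma convolution_dist_le:
  fixes k :: "real \<Rightarrow> real" and \<Psi> \<Phi> :: "real \<Rightarrow>\<^sub>C real"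
  assumes ck: "continuous_on {0..c} k" and c: "0 \<le> c"
  shows "dist (integral {0..c} (\<lambda>s. k (c - s) * \<Psi> s)) (integral {0..c} (\<lambda>s. k (c - s) * \<Phi> s))
    \<le> integral {0..c} (\<lambda>s. \<bar>k (c - s)\<bar>) * dist \<Psi> \<Phi>"
proof -
  have int: "(\<lambda>s. k (c - s) * apply_bcontfun \<Psi> s) integrable_on {0..c}" for \<Psi>
    by (intro integrable_continuous_interval continuous_intros continuous_on_compose2[OF ck]) auto
  have "dist (integral {0..c} (\<lambda>s. k (c - s) * \<Psi> s)) (integral {0..c} (\<lambda>s. k (c - s) * \<Phi> s))
      = norm (integral {0..c} (\<lambda>s. k (c - s) * (\<Psi> s - \<Phi> s)))"
    using int[of \<Psi>] int[of \<Phi>] by (simp add: dist_real_def integral_diff[symmetric] algebra_simps)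
  also have "\<dots> \<le> integral {0..c} (\<lambda>s. \<bar>k (c - s)\<bar> * dist \<Psi> \<Phi>)"
  proof (rule integral_norm_bound_integral)
    show "(\<lambda>s. k (c - s) * (\<Psi> s - \<Phi> s)) integrable_on {0..c}"
      using integrable_diff[OF int[of \<Psi>] int[of \<Phi>]] by (simp add: algebra_simps)
    show "(\<lambda>s. \<bar>k (c - s)\<bar> * dist \<Psi> \<Phi>) integrable_on {0..c}"
      by (intro integrable_continuous_interval continuous_intros continuous_on_compose2[OF ck]) auto
    show "norm (k (c - s) * (\<Psi> s - \<Phi> s)) \<le> \<bar>k (c - s)\<bar> * dist \<Psi> \<Phi>" for s
      using dist_bounded[of \<Psi> s \<Phi>] by (simp add: abs_mult dist_real_def mult_left_mono)
  qed
  finally show ?thesis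
    by simp
qed

lemma volterra_second_kind_contractive:
  fixes k k' h :: "real \<Rightarrow> real"
  assumes dk: "\<And>r. r \<ge> 0 \<Longrightarrow> (k has_real_derivative k' r) (at r within {0..})"
    and ck': "continuous_on {0..} k'"
    and ch: "continuous_on {0..T} h" and T: "0 \<le> T"
    and small: "\<And>c. c \<in> {0..T} \<Longrightarrow> integral {0..c} (\<lambda>s. \<bar>k (c - s)\<bar>) \<le> q" and q: "q < 1"
  obtains f where "continuous_on {0..T} f"
    and "\<And>t. t \<in> {0..T} \<Longrightarrow> f t = h t + integral {0..t} (\<lambda>s. k (t - s) * f s)"
proof -
  have ck: "continuous_on {0..} k"
    by (rule DERIV_continuous_on[OF dk]) simp
  have q_nonneg: "0 \<le> q"
    using small[of 0] T by simp
  define G where "G \<Psi> t = h t + integral {0..t} (\<lambda>s. k (t - s) * apply_bcontfun \<Psi> s)" for \<Psi> t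
  have "continuous_on {0..T} (G \<Psi>)" for \<Psi>
    unfolding G_def
    by (intro continuous_intros ch DERIV_continuous_on[OF convolution_has_real_derivative[OF dk ck']])
      auto
  moreover have "dist (G \<Psi> c) (G \<Phi> c) \<le> q * dist \<Psi> \<Phi>" if c: "c \<in> {0..T}" for \<Psi> \<Phi> c
  proof -
    have "dist (G \<Psi> c) (G \<Phi> c) \<le> integral {0..c} (\<lambda>s. \<bar>k (c - s)\<bar>) * dist \<Psi> \<Phi>"
      using convolution_dist_le[of c k \<Psi> \<Phi>] continuous_on_subset[OF ck, of "{0..c}"] c
      by (simp add: G_def dist_real_def)
    also have "\<dots> \<le> q * dist \<Psi> \<Phi>"
      using small[OF c] by (simp add: mult_right_mono)
    finally show ?thesis .
  qed
  ultimately obtain \<Psi> where \<Psi>: "\<And>t. t \<in> {0..T} \<Longrightarrow> apply_bcontfun \<Psi> t = G \<Psi> t"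
    by (rule bcontfun_fixpoint_on_cbox[where a=0 and b=T, unfolded cbox_interval])
      (use q_nonneg q T in auto)
  show ?thesis
  proof (rule that)
    show "continuous_on {0..T} (apply_bcontfun \<Psi>)"
      by (rule continuous_on_apply_bcontfun)
    show "apply_bcontfun \<Psi> t = h t + integral {0..t} (\<lambda>s. k (t - s) * apply_bcontfun \<Psi> s)"
      if "t \<in> {0..T}" for t
      using \<Psi>[OF that] by (simp add: G_def)
  qed
qed

lemma integral_exp_weighted_kernel_le:
  fixes k :: "real \<Rightarrow> real"
  assumes ck: "continuous_on {0..c} k" and bound: "\<And>r. r \<in> {0..c} \<Longrightarrow> \<bar>k r\<bar> \<le> M"
    and l: "l > 0" and c: "0 \<le> c"
  shows "integral {0..c} (\<lambda>s. \<bar>k (c - s) * exp (- (l * (c - s)))\<bar>) \<le> M / l"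
proof -
  have "integral {0..c} (\<lambda>s. \<bar>k (c - s) * exp (- (l * (c - s)))\<bar>)
      \<le> integral {0..c} (\<lambda>s. M * exp (- (l * (c - s))))"
  proof (rule integral_le)
    show "(\<lambda>s. \<bar>k (c - s) * exp (- (l * (c - s)))\<bar>) integrable_on {0..c}"
      by (intro integrable_continuous_interval continuous_intros continuous_on_compose2[OF ck]) auto
    show "(\<lambda>s. M * exp (- (l * (c - s)))) integrable_on {0..c}"
      by (intro integrable_continuous_interval continuous_intros)
    show "\<bar>k (c - s) * exp (- (l * (c - s)))\<bar> \<le> M * exp (- (l * (c - s)))" if "s \<in> {0..c}" for s
      using bound[of "c - s"] that by (simp add: abs_mult mult_right_mono)
  qed
  also have "\<dots> = M * integral {0..c} (\<lambda>s. exp (- (l * (c - s))))"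
    by simp
  also have "\<dots> \<le> M * (1 / l)"
    using bound[of 0] c by (intro mult_left_mono[OF integral_exp_decay_le[OF l c]]) auto
  finally show ?thesis
    by simp
qed

lemma volterra_exp_weighting:
  fixes k h \<phi> :: "real \<Rightarrow> real"
  assumes "\<phi> t = h t * exp (- (l * t)) + integral {0..t} (\<lambda>s. k (t - s) * exp (- (l * (t - s))) * \<phi> s)"
  shows "exp (l * t) * \<phi> t = h t + integral {0..t} (\<lambda>s. k (t - s) * (exp (l * s) * \<phi> s))"
proof -
  have "exp (l * t) * \<phi> t = exp (l * t) * (h t * exp (- (l * t)))
      + integral {0..t} (\<lambda>s. exp (l * t) * (k (t - s) * exp (- (l * (t - s))) * \<phi> s))"
    using assms by (simp add: distrib_left)
  also have "exp (l * t) * (h t * exp (- (l * t))) = h t"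
    by (simp add: exp_minus field_simps)
  also have "(\<lambda>s. exp (l * t) * (k (t - s) * exp (- (l * (t - s))) * \<phi> s))
      = (\<lambda>s. k (t - s) * (exp (l * s) * \<phi> s))"
  proof
    fix s
    have "exp (l * t) * exp (- (l * (t - s))) = exp (l * s)"
      by (simp add: algebra_simps flip: exp_add)
    then show "exp (l * t) * (k (t - s) * exp (- (l * (t - s))) * \<phi> s) = k (t - s) * (exp (l * s) * \<phi> s)"
      by (metis mult.assoc mult.left_commute)
  qed
  finally show ?thesis .
qed

lemma volterra_second_kind_solvable:
  fixes k k' h :: "real \<Rightarrow> real"
  assumes dk: "\<And>r. r \<ge> 0 \<Longrightarrow> (k has_real_derivative k' r) (at r within {0..})"
    and ck': "continuous_on {0..} k'"
    and ch: "continuous_on {0..T} h" and T: "0 \<le> T"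
  obtains f where "continuous_on {0..T} f"
    and "\<And>t. t \<in> {0..T} \<Longrightarrow> f t = h t + integral {0..t} (\<lambda>s. k (t - s) * f s)"
proof -
  have ck: "continuous_on {0..} k"
    by (rule DERIV_continuous_on[OF dk]) simp
  have "bounded (k ` {0..T})"
    by (intro compact_imp_bounded compact_continuous_image continuous_on_subset[OF ck]) auto
  then obtain M where M: "M > 0" "\<And>r. r \<in> {0..T} \<Longrightarrow> \<bar>k r\<bar> \<le> M"
    unfolding bounded_pos by auto
  \<comment> \<open>With the weight \<open>exp (- 2 M t)\<close> the kernel has integral at most \<open>1/2\<close>.\<close>
  define l where "l = 2 * M"
  have dkl: "((\<lambda>r. k r * exp (- (l * r))) has_real_derivative
      k' r * exp (- (l * r)) - k r * l * exp (- (l * r))) (at r within {0..})" if "r \<ge> 0" for r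
    using dk[OF that] by (auto intro!: derivative_eq_intros simp: algebra_simps)
  obtain \<phi> where "continuous_on {0..T} \<phi>" and \<phi>: "\<And>t. t \<in> {0..T} \<Longrightarrow>
      \<phi> t = h t * exp (- (l * t)) + integral {0..t} (\<lambda>s. k (t - s) * exp (- (l * (t - s))) * \<phi> s)"
  proof (rule volterra_second_kind_contractive[OF dkl _ _ T, where h="\<lambda>t. h t * exp (- (l * t))"])
    show "integral {0..c} (\<lambda>s. \<bar>k (c - s) * exp (- (l * (c - s)))\<bar>) \<le> M / l" if "c \<in> {0..T}" for c
      using M that by (intro integral_exp_weighted_kernel_le continuous_on_subset[OF ck])
        (auto simp: l_def)
  qed (use M in \<open>auto intro!: continuous_intros ck ck' ch simp: l_def\<close>)
  show ?thesis
  proof (rule that[of "\<lambda>t. exp (l * t) * \<phi> t"])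
    show "continuous_on {0..T} (\<lambda>t. exp (l * t) * \<phi> t)"
      by (intro continuous_intros) fact
    show "exp (l * t) * \<phi> t = h t + integral {0..t} (\<lambda>s. k (t - s) * (exp (l * s) * \<phi> s))"
      if "t \<in> {0..T}" for t
      using \<phi>[OF that] by (rule volterra_exp_weighting)
  qed
qed

lemma mvt_real_within:
  fixes f f' :: "real \<Rightarrow> real"
  assumes "a < b" and "{a..b} \<subseteq> S"
    and "\<And>x. x \<in> {a..b} \<Longrightarrow> (f has_real_derivative f' x) (at x within S)"
  shows "\<exists>x\<in>{a<..<b}. f b - f a = f' x * (b - a)"
proof (rule mvt_simple[OF \<open>a < b\<close>])
  fix x assume "a \<le> x" "x \<le> b"
  then show "(f has_derivative (\<lambda>h. f' x * h)) (at x within {a..b})"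
    using assms(2) assms(3)[of x] by (auto simp: has_field_derivative_def intro: has_derivative_subset)
qed

lemma neg_between_zero_and_double_zero:
  fixes P P' P'' :: "real \<Rightarrow> real"
  assumes dP: "\<And>x. x \<in> {a..b} \<Longrightarrow> (P has_real_derivative P' x) (at x within {a..b})"
    and dP': "\<And>x. x \<in> {a..b} \<Longrightarrow> (P' has_real_derivative P'' x) (at x within {a..b})"
    and P''_decreasing: "\<And>x z. a \<le> x \<Longrightarrow> x < z \<Longrightarrow> z \<le> b \<Longrightarrow> P'' z < P'' x"
    and zeros: "P a = 0" "P b = 0" "P' b = 0"
    and y: "a < y" "y < b"
  shows "P y < 0"
proof (rule ccontr)
  assume "\<not> P y < 0"
  obtain u where u: "u \<in> {a<..<y}" "P y - P a = P' u * (y - a)"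
    using mvt_real_within[of a y "{a..b}" P P'] y dP by auto
  obtain v where v: "v \<in> {y<..<b}" "P b - P y = P' v * (b - y)"
    using mvt_real_within[of y b "{a..b}" P P'] y dP by auto
  have "P' u * (y - a) \<ge> 0" "P' v * (b - y) \<le> 0"
    using u v zeros \<open>\<not> P y < 0\<close> by auto
  then have "P' u \<ge> 0" "P' v \<le> 0"
    using y by (auto simp: zero_le_mult_iff mult_le_0_iff)
  obtain c where c: "c \<in> {u<..<v}" "P' v - P' u = P'' c * (v - u)"
    using mvt_real_within[of u v "{a..b}" P' P''] u v dP' by auto
  obtain d where d: "d \<in> {v<..<b}" "P' b - P' v = P'' d * (b - v)"
    using mvt_real_within[of v b "{a..b}" P' P''] u v dP' by auto
  have "P'' c * (v - u) \<le> 0" "P'' d * (b - v) \<ge> 0"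
    using c d \<open>P' u \<ge> 0\<close> \<open>P' v \<le> 0\<close> zeros by auto
  then have "P'' c \<le> 0" "P'' d \<ge> 0"
    using c d by (auto simp: mult_le_0_iff zero_le_mult_iff)
  moreover have "P'' d < P'' c"
    using P''_decreasing[of c d] u v c d by auto
  ultimately show False
    by simp
qed

lemma exists_above_diagonal:
  fixes f :: "real \<Rightarrow> real" and f' :: real
  assumes "(f has_real_derivative f') (at 0 within {0..1})" "f 0 = 0" "f' > 1"
  obtains p where "0 < p" "p < 1" "p < f p"
proof -
  have "((\<lambda>y. (f y - f 0) / (y - 0)) \<longlongrightarrow> f') (at 0 within {0..1})"
    using assms(1) by (simp add: has_field_derivative_iff)
  then have "eventually (\<lambda>y. 1 < f y / y) (at 0 within {0..1})"
    using assms(2,3) by (auto dest: order_tendstoD(1))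
  then obtain d where d: "d > 0" "\<And>y. y \<in> {0..1} \<Longrightarrow> y \<noteq> 0 \<Longrightarrow> dist y 0 < d \<Longrightarrow> 1 < f y / y"
    unfolding eventually_at by auto
  define p where "p = min (d / 2) (1 / 2)"
  have "0 < p" "p < 1" "p < d"
    using d by (auto simp: p_def)
  with d(2)[of p] show thesis
    by (intro that) (auto simp: field_simps)
qed

lemma first_zero_after_positive_start:
  fixes \<gamma> :: "real \<Rightarrow> real"
  assumes c\<gamma>: "continuous_on {a..b} \<gamma>" and start: "\<gamma> a > 0" and s: "s \<in> {a..b}" "\<gamma> s \<le> 0"
  obtains t0 where "a < t0" "t0 \<le> b" "\<gamma> t0 = 0" "\<And>s. s \<in> {a..<t0} \<Longrightarrow> \<gamma> s > 0"
proof -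
  define Z where "Z = {s \<in> {a..b}. \<gamma> s \<le> 0}"
  have "Z \<noteq> {}" "bdd_below Z"
    using s by (auto simp: Z_def bdd_below_def)
  moreover have "closed Z"
    unfolding Z_def by (rule continuous_on_closed_Collect_le[OF c\<gamma> continuous_on_const]) simp
  ultimately have t0: "Inf Z \<in> Z" and least: "\<And>s. s \<in> Z \<Longrightarrow> Inf Z \<le> s"
    by (auto intro: closed_contains_Inf cInf_lower)
  then have "a < Inf Z"
    using start by (cases "Inf Z = a") (auto simp: Z_def)
  have pos: "\<gamma> s > 0" if "s \<in> {a..<Inf Z}" for s
    using least[of s] that t0 by (force simp: Z_def)
  have "\<gamma> (Inf Z) = 0"
  proof (rule ccontr)
    assume "\<gamma> (Inf Z) \<noteq> 0"
    then have "\<gamma> (Inf Z) < 0"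
      using t0 by (simp add: Z_def)
    then obtain x where "a \<le> x" "x \<le> Inf Z" "\<gamma> x = 0"
      using IVT2'[of \<gamma> "Inf Z" 0 a] start t0 continuous_on_subset[OF c\<gamma>, of "{a..Inf Z}"]
      by (auto simp: Z_def)
    with pos[of x] \<open>\<gamma> (Inf Z) < 0\<close> show False
      by (cases "x = Inf Z") auto
  qed
  with \<open>a < Inf Z\<close> t0 pos show thesis
    by (intro that) (auto simp: Z_def)
qed

lemma has_real_derivative_compose_within:
  fixes \<phi> \<phi>' u :: "real \<Rightarrow> real"
  assumes d\<phi>: "\<And>p. p \<in> A \<Longrightarrow> (\<phi> has_real_derivative \<phi>' p) (at p within A)"
    and du: "(u has_real_derivative u') (at x within S)" and S: "u ` S \<subseteq> A" "x \<in> S"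
  shows "((\<lambda>x. \<phi> (u x)) has_real_derivative \<phi>' (u x) * u') (at x within S)"
proof -
  have "(\<phi> has_real_derivative \<phi>' (u x)) (at (u x) within u ` S)"
    using S by (intro has_field_derivative_subset[OF d\<phi>]) auto
  from DERIV_image_chain[OF this du] show ?thesis
    by (simp add: o_def)
qed

lemma has_real_derivative_comp_exp_neg:
  fixes \<phi> \<phi>' :: "real \<Rightarrow> real"
  assumes d\<phi>: "\<And>p. p \<in> {0..1} \<Longrightarrow> (\<phi> has_real_derivative \<phi>' p) (at p within {0..1})"
    and r: "r \<ge> 0"
  shows "((\<lambda>r. \<phi> (exp (- r))) has_real_derivative - (\<phi>' (exp (- r)) * exp (- r)))
    (at r within {0..})"
proof -
  have "((\<lambda>r. exp (- r)) has_real_derivative - exp (- r)) (at r within {0..})"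
    by (auto intro!: derivative_eq_intros)
  moreover have "(\<lambda>r. exp (- r)) ` {0..} \<subseteq> {0..1::real}"
    by auto
  ultimately show ?thesis
    using has_real_derivative_compose_within[OF d\<phi>] r by fastforce
qed

lemma has_real_derivative_integral_dilation:
  fixes \<phi> \<phi>' g :: "real \<Rightarrow> real"
  assumes d\<phi>: "\<And>p. p \<in> {0..1} \<Longrightarrow> (\<phi> has_real_derivative \<phi>' p) (at p within {0..1})"
    and c\<phi>': "continuous_on {0..1} \<phi>'" and cg: "continuous_on {0..b} g"
    and x0: "0 \<le> x0" "x0 * exp b \<le> 1" and x: "x \<in> {0..x0}"
  shows "((\<lambda>x. integral {0..b} (\<lambda>s. \<phi> (x * exp s) * g s)) has_real_derivative
      integral {0..b} (\<lambda>s. \<phi>' (x * exp s) * (exp s * g s))) (at x within {0..x0})"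
proof -
  have c\<phi>: "continuous_on {0..1} \<phi>"
    by (rule DERIV_continuous_on[OF d\<phi>])
  have range: "x * exp s \<in> {0..1}" if "x \<in> {0..x0}" "s \<in> {0..b}" for x s
  proof -
    have "x * exp s \<le> x0 * exp b"
      using that by (intro mult_mono) auto
    then show ?thesis
      using that x0 by auto
  qed
  have "((\<lambda>x. integral (cbox 0 b) (\<lambda>s. \<phi> (x * exp s) * g s)) has_real_derivative
      integral (cbox 0 b) (\<lambda>s. \<phi>' (x * exp s) * (exp s * g s))) (at x within {0..x0})"
  proof (rule leibniz_rule_field_derivative)
    fix x s assume xs: "x \<in> {0..x0}" "s \<in> cbox 0 b"
    have "((\<lambda>x. \<phi> (x * exp s)) has_real_derivative \<phi>' (x * exp s) * exp s) (at x within {0..x0})"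
      using xs range by (intro has_real_derivative_compose_within[OF d\<phi>] derivative_eq_intros) auto
    from DERIV_cmult_right[OF this, of "g s"]
    show "((\<lambda>x. \<phi> (x * exp s) * g s) has_real_derivative \<phi>' (x * exp s) * (exp s * g s))
        (at x within {0..x0})"
      by (simp add: algebra_simps)
  next
    fix x assume "x \<in> {0..x0}"
    then show "(\<lambda>s. \<phi> (x * exp s) * g s) integrable_on cbox 0 b"
      unfolding cbox_interval
      by (intro integrable_continuous_interval continuous_intros cg continuous_on_compose2[OF c\<phi>])
        (auto intro: range)
  next
    show "continuous_on ({0..x0} \<times> cbox 0 b) (\<lambda>(x, s). \<phi>' (x * exp s) * (exp s * g s))"
      unfolding cbox_interval case_prod_unfold
      by (intro continuous_intros continuous_on_compose2[OF c\<phi>'] continuous_on_compose2[OF cg])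
        (auto intro: range)
  qed (use x in auto)
  then show ?thesis
    by (simp add: cbox_interval)
qed

definition dilation_mixture :: "(real \<Rightarrow> real) \<Rightarrow> (real \<Rightarrow> real) \<Rightarrow> real \<Rightarrow> real \<Rightarrow> real" where
  "dilation_mixture \<phi> g b x = \<phi> x + integral {0..b} (\<lambda>s. \<phi> (x * exp s) * g s)"

lemma dilation_mixture_has_real_derivative:
  fixes \<phi> \<phi>' g :: "real \<Rightarrow> real"
  assumes d\<phi>: "\<And>p. p \<in> {0..1} \<Longrightarrow> (\<phi> has_real_derivative \<phi>' p) (at p within {0..1})"
    and c\<phi>': "continuous_on {0..1} \<phi>'" and cg: "continuous_on {0..b} g" and b: "0 \<le> b"
    and x0: "0 \<le> x0" "x0 * exp b \<le> 1" and x: "x \<in> {0..x0}"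
  shows "(dilation_mixture \<phi> g b has_real_derivative dilation_mixture \<phi>' (\<lambda>s. exp s * g s) b x)
    (at x within {0..x0})"
  unfolding dilation_mixture_def
proof (rule DERIV_add)
  have "x0 * 1 \<le> x0 * exp b"
    using x0 b by (intro mult_left_mono) auto
  then show "(\<phi> has_real_derivative \<phi>' x) (at x within {0..x0})"
    using x x0 by (intro has_field_derivative_subset[OF d\<phi>]) auto
qed (rule has_real_derivative_integral_dilation[OF d\<phi> c\<phi>' cg x0 x])

lemma dilation_mixture_strict_mono:
  fixes \<phi> g :: "real \<Rightarrow> real"
  assumes \<phi>: "strict_mono_on {0..1} \<phi>" "continuous_on {0..1} \<phi>"
    and cg: "continuous_on {0..b} g" and g: "\<And>s. s \<in> {0..b} \<Longrightarrow> g s \<ge> 0"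
    and xy: "0 \<le> x" "x < y" "y * exp b \<le> 1" and b: "0 \<le> b"
  shows "dilation_mixture \<phi> g b x < dilation_mixture \<phi> g b y"
proof -
  have range: "z * exp s \<in> {0..1}" if "0 \<le> z" "z \<le> y" "s \<in> {0..b}" for z s
  proof -
    have "z * exp s \<le> y * exp b"
      using that by (intro mult_mono) auto
    then show ?thesis
      using that xy by auto
  qed
  have int: "(\<lambda>s. \<phi> (z * exp s) * g s) integrable_on {0..b}" if "0 \<le> z" "z \<le> y" for z
    using that
    by (intro integrable_continuous_interval continuous_intros cg continuous_on_compose2[OF \<phi>(2)])
      (auto intro: range)
  have "integral {0..b} (\<lambda>s. \<phi> (x * exp s) * g s) \<le> integral {0..b} (\<lambda>s. \<phi> (y * exp s) * g s)"
  proof (rule integral_le[OF int int])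
    fix s assume s: "s \<in> {0..b}"
    have "x * exp s \<le> y * exp s"
      using xy by simp
    then have "\<phi> (x * exp s) \<le> \<phi> (y * exp s)"
      using strict_mono_on_leD[OF \<phi>(1)] range[of x s] range[of y s] s xy by auto
    then show "\<phi> (x * exp s) * g s \<le> \<phi> (y * exp s) * g s"
      using g[OF s] by (rule mult_right_mono)
  qed (use xy in auto)
  moreover have "\<phi> x < \<phi> y"
    using strict_mono_onD[OF \<phi>(1)] xy range[of x 0] range[of y 0] b by simp
  ultimately show ?thesis
    by (simp add: dilation_mixture_def)
qed

lemma continuous_comp_exp_neg:
  fixes \<phi> :: "real \<Rightarrow> real"
  shows "continuous_on {0..1} \<phi> \<Longrightarrow> continuous_on {0..} (\<lambda>r. \<phi> (exp (- r)))"
  by (erule continuous_on_compose2) (auto intro!: continuous_intros)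

lemma exp_neg_mult_exp: "exp (- t) * exp s = exp (- (t - s :: real))"
  by (simp add: mult_exp_exp)

lemma integral_mult_truncation:
  fixes f g :: "real \<Rightarrow> real"
  shows "integral {a..b} (\<lambda>s. f s * (if s \<le> c then g s else 0))
    = integral {a..min b c} (\<lambda>s. f s * g s)"
proof -
  have "integral {a..b} (\<lambda>s. f s * (if s \<le> c then g s else 0))
      = integral {a..b} (\<lambda>s. if s \<in> {..c} then f s * g s else 0)"
    by (rule integral_cong) simp
  also have "\<dots> = integral ({..c} \<inter> {a..b}) (\<lambda>s. f s * g s)"
    by (rule integral_restrict_Int)
  also have "{..c} \<inter> {a..b} = {a..min b c}"
    by auto
  finally show ?thesis .
qed

locale weighting_function =
  fixes w w1 w2 w3 :: "real \<Rightarrow> real"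
  assumes range: "w ` {0..1} \<subseteq> {0..1}"
    and deriv1: "\<And>p. p \<in> {0..1} \<Longrightarrow> (w has_real_derivative w1 p) (at p within {0..1})"
    and deriv2: "\<And>p. p \<in> {0..1} \<Longrightarrow> (w1 has_real_derivative w2 p) (at p within {0..1})"
    and deriv3: "\<And>p. p \<in> {0..1} \<Longrightarrow> (w2 has_real_derivative w3 p) (at p within {0..1})"
    and w_0: "w 0 = 0" and w_1: "w 1 = 1"
    and w1_0: "w1 0 > 1" and w1_1: "w1 1 > 1"
    and w3_pos: "\<And>p. p \<in> {0..1} \<Longrightarrow> w3 p > 0"
begin

lemma continuous_w: "continuous_on {0..1} w"
  and continuous_w1: "continuous_on {0..1} w1"
  and continuous_w2: "continuous_on {0..1} w2"
  using DERIV_continuous_on deriv1 deriv2 deriv3 by blast+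

lemma strict_mono_w2: "strict_mono_on {0..1} w2"
proof (rule strict_mono_onI)
  fix a b :: real assume ab: "a \<in> {0..1}" "b \<in> {0..1}" "a < b"
  then obtain x where "x \<in> {a<..<b}" "w2 b - w2 a = w3 x * (b - a)"
    using mvt_real_within[of a b "{0..1}" w2 w3] deriv3 by auto
  moreover have "w3 x > 0"
    using w3_pos[of x] ab \<open>x \<in> {a<..<b}\<close> by auto
  ultimately show "w2 a < w2 b"
    using ab by (metis diff_gt_0_iff_gt mult_pos_pos)
qed

definition kernel :: "real \<Rightarrow> real" where
  "kernel r = w (exp (- r))"

definition kernel' :: "real \<Rightarrow> real" where
  "kernel' r = - (w1 (exp (- r)) * exp (- r))"

definition kernel'' :: "real \<Rightarrow> real" where
  "kernel'' r = w2 (exp (- r)) * exp (- r) * exp (- r) + w1 (exp (- r)) * exp (- r)"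

definition gap :: "real \<Rightarrow> real" where
  "gap t = exp (- t) - w (exp (- t))"

definition gap' :: "real \<Rightarrow> real" where
  "gap' t = exp (- t) * (w1 (exp (- t)) - 1)"

lemma kernel_has_derivative: "r \<ge> 0 \<Longrightarrow> (kernel has_real_derivative kernel' r) (at r within {0..})"
  unfolding kernel_def kernel'_def by (rule has_real_derivative_comp_exp_neg[OF deriv1])

lemma kernel'_has_derivative: "r \<ge> 0 \<Longrightarrow> (kernel' has_real_derivative kernel'' r) (at r within {0..})"
  unfolding kernel'_def kernel''_def
  by (auto intro!: derivative_eq_intros has_real_derivative_comp_exp_neg[OF deriv2]
      simp: algebra_simps)

lemma gap_has_derivative: "t \<ge> 0 \<Longrightarrow> (gap has_real_derivative gap' t) (at t within {0..})"
  unfolding gap_def gap'_def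
  by (auto intro!: derivative_eq_intros has_real_derivative_comp_exp_neg[OF deriv1]
      simp: algebra_simps)

lemma continuous_kernel': "continuous_on {0..} kernel'"
  and continuous_kernel'': "continuous_on {0..} kernel''"
  and continuous_gap': "continuous_on {0..} gap'"
  unfolding kernel'_def kernel''_def gap'_def
  by (auto intro!: continuous_intros continuous_comp_exp_neg continuous_w1 continuous_w2)

lemma exists_solution:
  assumes T: "0 \<le> T"
  obtains \<gamma> where "continuous_on {0..T} \<gamma>"
    and "\<And>t. t \<in> {0..T} \<Longrightarrow> gap' t = \<gamma> t + integral {0..t} (\<lambda>s. kernel' (t - s) * \<gamma> s)"
    and "\<And>t. t \<in> {0..T} \<Longrightarrow> gap t = integral {0..t} (\<lambda>s. kernel (t - s) * \<gamma> s)"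
proof -
  obtain \<gamma> where c\<gamma>: "continuous_on {0..T} \<gamma>"
    and \<gamma>: "\<And>t. t \<in> {0..T} \<Longrightarrow> \<gamma> t = gap' t + integral {0..t} (\<lambda>s. - kernel' (t - s) * \<gamma> s)"
  proof (rule volterra_second_kind_solvable[where k="\<lambda>r. - kernel' r" and k'="\<lambda>r. - kernel'' r" and h=gap'])
    show "((\<lambda>r. - kernel' r) has_real_derivative - kernel'' r) (at r within {0..})" if "r \<ge> 0" for r
      using kernel'_has_derivative[OF that] by (rule DERIV_minus)
  qed (auto intro!: continuous_intros continuous_kernel'' continuous_on_subset[OF continuous_gap'] T)
  have eq': "gap' t = \<gamma> t + integral {0..t} (\<lambda>s. kernel' (t - s) * \<gamma> s)" if "t \<in> {0..T}" for t
    using \<gamma>[OF that] by (simp add: integral_neg)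
  have "gap t = integral {0..t} (\<lambda>s. kernel (t - s) * \<gamma> s)" if "t \<in> {0..T}" for t
  proof (rule eq_convolution_if_derivatives_eq[OF kernel_has_derivative continuous_kernel' _ c\<gamma> _ _ that])
    show "(gap has_real_derivative gap' t) (at t within {0..T})" if "t \<in> {0..T}" for t
      using that by (intro has_field_derivative_subset[OF gap_has_derivative]) auto
    show "gap' t = kernel 0 * \<gamma> t + integral {0..t} (\<lambda>s. kernel' (t - s) * \<gamma> s)"
      if "t \<in> {0..T}" for t
      using eq'[OF that] w_1 by (simp add: kernel_def)
    show "gap 0 = 0"
      using w_1 by (simp add: gap_def)
  qed
  with c\<gamma> eq' show thesis
    by (rule that)
qed

lemma solution_pos_at_0:
  assumes "gap' 0 = \<gamma> 0 + integral {0..0} (\<lambda>s. kernel' (0 - s) * \<gamma> s)"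
  shows "\<gamma> 0 > 0"
  using assms w1_1 by (simp add: gap'_def)

lemma kernel_nonneg: "r \<ge> 0 \<Longrightarrow> kernel r \<ge> 0"
  using range by (auto simp: kernel_def image_subset_iff)

lemma solution_not_pos_if_gap_neg:
  assumes T: "0 \<le> T" "gap T < 0" and c\<gamma>: "continuous_on {0..T} \<gamma>"
    and eq: "gap T = integral {0..T} (\<lambda>s. kernel (T - s) * \<gamma> s)"
  obtains s where "s \<in> {0..T}" "\<gamma> s \<le> 0"
proof -
  have "\<not> (\<forall>s\<in>{0..T}. \<gamma> s > 0)"
  proof
    assume pos: "\<forall>s\<in>{0..T}. \<gamma> s > 0"
    have "integral {0..T} (\<lambda>s. kernel (T - s) * \<gamma> s) \<ge> 0"
    proof (rule integral_nonneg)
      show "(\<lambda>s. kernel (T - s) * \<gamma> s) integrable_on {0..T}"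
        unfolding kernel_def
        by (intro integrable_continuous_interval continuous_intros c\<gamma>
            continuous_on_compose2[OF continuous_w]) auto
      show "0 \<le> kernel (T - s) * \<gamma> s" if "s \<in> {0..T}" for s
        using kernel_nonneg[of "T - s"] pos that by (simp add: less_imp_le)
    qed
    with T eq show False
      by simp
  qed
  then show thesis
    using that by force
qed

lemma gap_neg_somewhere:
  obtains T where "T > 0" "gap T < 0"
proof -
  obtain p where p: "0 < p" "p < 1" "p < w p"
    using exists_above_diagonal[OF deriv1 w_0 w1_0] by auto
  show thesis
  proof (rule that[of "- ln p"])
    show "- ln p > 0" "gap (- ln p) < 0"
      using p by (simp_all add: gap_def)
  qed
qed

lemma gap_minus_convolution_eq_dilation_mixture:
  "exp (- t) - dilation_mixture w \<gamma> b (exp (- t))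
    = gap t - integral {0..b} (\<lambda>s. kernel (t - s) * \<gamma> s)"
  by (simp add: dilation_mixture_def gap_def kernel_def exp_neg_mult_exp)

lemma gap'_minus_convolution_eq_dilation_mixture:
  "exp (- t) * (1 - dilation_mixture w1 (\<lambda>s. exp s * \<gamma> s) b (exp (- t)))
    = integral {0..b} (\<lambda>s. kernel' (t - s) * \<gamma> s) - gap' t"
proof -
  have "kernel' (t - s) * \<gamma> s = - (exp (- t) * (w1 (exp (- t) * exp s) * (exp s * \<gamma> s)))" for s
    by (simp add: kernel'_def exp_neg_mult_exp)
  then have "integral {0..b} (\<lambda>s. kernel' (t - s) * \<gamma> s)
      = - (exp (- t) * integral {0..b} (\<lambda>s. w1 (exp (- t) * exp s) * (exp s * \<gamma> s)))"
    by simp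
  then show ?thesis
    by (simp add: dilation_mixture_def gap'_def algebra_simps)
qed

lemma gap_lt_convolution_after_zero:
  assumes t0: "0 < t0" and c\<gamma>: "continuous_on {0..t0} \<gamma>"
    and \<gamma>_nonneg: "\<And>s. s \<in> {0..t0} \<Longrightarrow> 0 \<le> \<gamma> s"
    and eq: "gap t0 = integral {0..t0} (\<lambda>s. kernel (t0 - s) * \<gamma> s)"
    and eq': "gap' t0 = integral {0..t0} (\<lambda>s. kernel' (t0 - s) * \<gamma> s)"
    and t: "t0 < t"
  shows "gap t < integral {0..t0} (\<lambda>s. kernel (t - s) * \<gamma> s)"
proof -
  define x0 where "x0 = exp (- t0)"
  have x0: "0 < x0" "x0 * exp t0 = 1"
    by (simp_all add: x0_def exp_minus)
  define \<gamma>1 where "\<gamma>1 s = exp s * \<gamma> s" for s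
  define \<gamma>2 where "\<gamma>2 s = exp s * \<gamma>1 s" for s
  have c\<gamma>1: "continuous_on {0..t0} \<gamma>1" and c\<gamma>2: "continuous_on {0..t0} \<gamma>2"
    unfolding \<gamma>2_def \<gamma>1_def by (intro continuous_intros c\<gamma>)+
  define \<Phi> where "\<Phi> x = x - dilation_mixture w \<gamma> t0 x" for x
  have "(\<Phi> has_real_derivative 1 - dilation_mixture w1 \<gamma>1 t0 x) (at x within {0..x0})"
    if "x \<in> {0..x0}" for x
    unfolding \<Phi>_def \<gamma>1_def using t0 x0 that
    by (intro DERIV_diff DERIV_ident dilation_mixture_has_real_derivative[OF deriv1 continuous_w1 c\<gamma>])
      auto
  moreover have "((\<lambda>x. 1 - dilation_mixture w1 \<gamma>1 t0 x) has_real_derivative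
      0 - dilation_mixture w2 \<gamma>2 t0 x) (at x within {0..x0})" if "x \<in> {0..x0}" for x
    unfolding \<gamma>2_def using t0 x0 that
    by (intro DERIV_diff DERIV_const dilation_mixture_has_real_derivative[OF deriv2 continuous_w2 c\<gamma>1])
      auto
  moreover have "0 - dilation_mixture w2 \<gamma>2 t0 z < 0 - dilation_mixture w2 \<gamma>2 t0 x"
    if "0 \<le> x" "x < z" "z \<le> x0" for x z
    using that t0 x0 \<gamma>_nonneg
    by (intro diff_strict_left_mono dilation_mixture_strict_mono[OF strict_mono_w2 continuous_w2 c\<gamma>2])
      (auto simp: \<gamma>2_def \<gamma>1_def order_trans[OF mult_right_mono])
  moreover have "\<Phi> 0 = 0" "\<Phi> x0 = 0"
    using w_0 eq gap_minus_convolution_eq_dilation_mixture[of t0 \<gamma> t0]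
    by (simp_all add: \<Phi>_def dilation_mixture_def x0_def)
  moreover have "1 - dilation_mixture w1 \<gamma>1 t0 x0 = 0"
    using eq' x0 gap'_minus_convolution_eq_dilation_mixture[of t0 \<gamma> t0]
    by (simp add: \<gamma>1_def[abs_def] x0_def)
  ultimately have "\<Phi> (exp (- t)) < 0"
    by (rule neg_between_zero_and_double_zero) (use t in \<open>auto simp: x0_def\<close>)
  then show ?thesis
    using gap_minus_convolution_eq_dilation_mixture[of t \<gamma> t0] by (simp add: \<Phi>_def)
qed

lemma exists_solution_up_to_first_zero:
  obtains t0 \<gamma> where "0 < t0" "continuous_on {0..t0} \<gamma>" "\<gamma> t0 = 0"
    and "\<And>s. s \<in> {0..<t0} \<Longrightarrow> 0 < \<gamma> s"
    and "\<And>t. t \<in> {0..t0} \<Longrightarrow> gap t = integral {0..t} (\<lambda>s. kernel (t - s) * \<gamma> s)"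
    and "\<And>t. t0 < t \<Longrightarrow> gap t < integral {0..t0} (\<lambda>s. kernel (t - s) * \<gamma> s)"
proof -
  obtain T where T: "0 < T" "gap T < 0"
    by (rule gap_neg_somewhere)
  obtain \<gamma> where c\<gamma>: "continuous_on {0..T} \<gamma>"
    and eq': "\<And>t. t \<in> {0..T} \<Longrightarrow> gap' t = \<gamma> t + integral {0..t} (\<lambda>s. kernel' (t - s) * \<gamma> s)"
    and eq: "\<And>t. t \<in> {0..T} \<Longrightarrow> gap t = integral {0..t} (\<lambda>s. kernel (t - s) * \<gamma> s)"
    using exists_solution[of T] T by auto
  obtain s where "s \<in> {0..T}" "\<gamma> s \<le> 0"
    using solution_not_pos_if_gap_neg[OF _ T(2) c\<gamma> eq] T by auto
  then obtain t0 where t0: "0 < t0" "t0 \<le> T" "\<gamma> t0 = 0"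
    and pos: "\<And>s. s \<in> {0..<t0} \<Longrightarrow> \<gamma> s > 0"
    using first_zero_after_positive_start[OF c\<gamma> solution_pos_at_0[OF eq'[of 0]]] T by auto
  have c\<gamma>0: "continuous_on {0..t0} \<gamma>"
    by (rule continuous_on_subset[OF c\<gamma>]) (use t0 in auto)
  have "\<gamma> s \<ge> 0" if "s \<in> {0..t0}" for s
    using pos[of s] t0 that by (cases "s = t0") auto
  then have after: "gap t < integral {0..t0} (\<lambda>s. kernel (t - s) * \<gamma> s)" if "t0 < t" for t
    using gap_lt_convolution_after_zero[OF t0(1) c\<gamma>0 _ eq[of t0] _ that] eq'[of t0] t0 by simp
  show thesis
  proof (rule that[OF t0(1) c\<gamma>0 t0(3)])
    show "0 < \<gamma> s" if "s \<in> {0..<t0}" for s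
      using pos that .
    show "gap t = integral {0..t} (\<lambda>s. kernel (t - s) * \<gamma> s)" if "t \<in> {0..t0}" for t
      using eq that t0 by auto
    show "gap t < integral {0..t0} (\<lambda>s. kernel (t - s) * \<gamma> s)" if "t0 < t" for t
      using after that .
  qed
qed

end

theorem lemma8:
  fixes w w1 w2 w3 :: "real \<Rightarrow> real"
  assumes mono: "strict_mono_on {0..1} w"
    and range: "w ` {0..1} \<subseteq> {0..1}"
    and d1: "\<And>p. p \<in> {0..1} \<Longrightarrow> (w has_real_derivative w1 p) (at p within {0..1})"
    and d2: "\<And>p. p \<in> {0..1} \<Longrightarrow> (w1 has_real_derivative w2 p) (at p within {0..1})"
    and d3: "\<And>p. p \<in> {0..1} \<Longrightarrow> (w2 has_real_derivative w3 p) (at p within {0..1})"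
    and w0: "w 0 = 0" and w1v: "w 1 = 1"
    and d0: "w1 0 > 1" and d1v: "w1 1 > 1"
    and d3pos: "\<And>p. p \<in> {0..1} \<Longrightarrow> w3 p > 0"
  shows "\<exists>(\<gamma>::real \<Rightarrow> real) (t0::real). t0 > 0 \<and>
     (\<forall>t. 0 \<le> t \<longrightarrow> \<gamma> integrable_on {0..t}) \<and>
     (\<forall>t\<in>{0..<t0}. \<gamma> t > 0) \<and> (\<forall>t. t0 \<le> t \<longrightarrow> \<gamma> t = 0) \<and>
     (\<forall>t\<in>{0..t0}. exp (-t) - w (exp (-t))
        - integral {0..t} (\<lambda>s. w (exp (-t + s)) * \<gamma> s) = 0) \<and>
     (\<forall>t. t0 < t \<longrightarrow> exp (-t) - w (exp (-t))
        - integral {0..t} (\<lambda>s. w (exp (-t + s)) * \<gamma> s) < 0)"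
proof -
  interpret weighting_function w w1 w2 w3
    using range d1 d2 d3 w0 w1v d0 d1v d3pos by unfold_locales
  obtain t0 \<gamma> where t0: "0 < t0" "continuous_on {0..t0} \<gamma>" "\<gamma> t0 = 0"
    and pos: "\<And>s. s \<in> {0..<t0} \<Longrightarrow> 0 < \<gamma> s"
    and eq: "\<And>t. t \<in> {0..t0} \<Longrightarrow> gap t = integral {0..t} (\<lambda>s. kernel (t - s) * \<gamma> s)"
    and after: "\<And>t. t0 < t \<Longrightarrow> gap t < integral {0..t0} (\<lambda>s. kernel (t - s) * \<gamma> s)"
    by (fact exists_solution_up_to_first_zero)
  define \<gamma>0 where "\<gamma>0 s = (if s \<le> t0 then \<gamma> s else 0)" for s
  have conv: "integral {0..t} (\<lambda>s. w (exp (- t + s)) * \<gamma>0 s)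
      = integral {0..min t t0} (\<lambda>s. kernel (t - s) * \<gamma> s)" for t
    unfolding \<gamma>0_def integral_mult_truncation by (simp add: kernel_def)
  show ?thesis
  proof (intro exI[of _ \<gamma>0] exI[of _ t0] conjI allI impI ballI)
    show "\<gamma>0 integrable_on {0..t}" for t
      using integrable_restrict_Int[of "{..t0}" \<gamma> "{0..t}"] t0(2)
      by (simp add: \<gamma>0_def[abs_def] Int_atLeastAtMost integrable_continuous_interval
          continuous_on_subset)
    show "exp (- t) - w (exp (- t)) - integral {0..t} (\<lambda>s. w (exp (- t + s)) * \<gamma>0 s) = 0"
      if "t \<in> {0..t0}" for t
      using eq[OF that] that unfolding conv by (simp add: gap_def)
    show "exp (- t) - w (exp (- t)) - integral {0..t} (\<lambda>s. w (exp (- t + s)) * \<gamma>0 s) < 0"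
      if "t0 < t" for t
      using after[OF that] that unfolding conv by (simp add: gap_def)
  qed (use t0 pos in \<open>auto simp: \<gamma>0_def\<close>)
qed

end
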